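(* Let $\triangle ABC$ be a triangle with side lengths $a=|BC|$, $b=|CA|$, $c=|AB|$ satisfying $a>b>c$, and with angles $\alpha=\angle A$, $\beta=\angle B$, $\gamma=\angle C$ (so $\alpha>\beta>\gamma$). For each side $x\in\{a,b,c\}$ that admits an inscribed equilateral triangle with one side lying on $x$, let $T_x$ be such an inscribed equilateral triangle of largest area on side $x$. Then: (Max) Among the sides admitting such a triangle, the largest area of $T_x$ is attained exactly on the long side $a$ when $\beta\neq 60^\circ$, and exactly on the sides $a$ and $c$ when $\beta=60^\circ$. (Min) The smallest area of $T_x$ (over the sides admitting such a triangle) is attained: A. exactly on side $c$ when $\alpha>120^\circ$, and exactly on sides $b$ and $c$ when $\alpha=120^\circ$; B. exactly on side $b$ when $60^\circ<\alpha<120^\circ$ and $\beta<60^\circ$; C. exactly on side $b$ when $\beta\ge 60^\circ$.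
   Context: An equilateral triangle is inscribed in $\triangle ABC$ if all three of its vertices lie on the boundary of $\triangle ABC$. An inscribed equilateral triangle "on side $x$" is one having one of its sides contained in the side $x$ of $\triangle ABC$. If both angles of $\triangle ABC$ at the endpoints of side $x$ exceed $60^\circ$, no inscribed equilateral triangle exists on that side, and that side is excluded from the comparison. The inscribed equilateral triangle of largest area among the (at most three) triangles $T_a,T_b,T_c$ is called the max inscribed equilateral triangle, and the one of smallest area the min inscribed equilateral triangle. *)

theory Defs
  imports "HOL-Analysis.Analysis"
begin

definition vec_angle :: "complex \<Rightarrow> complex \<Rightarrow> real" where
  "vec_angle u v = arccos ((u \<bullet> v) / (norm u * norm v))"

definition tri_angle :: "complex \<Rightarrow> complex \<Rightarrow> complex \<Rightarrow> real" where
  "tri_angle X V Y = vec_angle (X - V) (Y - V)"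

definition tri_area :: "complex \<Rightarrow> complex \<Rightarrow> complex \<Rightarrow> real" where
  "tri_area P Q R = \<bar>Im ((Q - P) * cnj (R - P))\<bar> / 2"

definition equilateral :: "complex \<Rightarrow> complex \<Rightarrow> complex \<Rightarrow> bool" where
  "equilateral P Q R \<longleftrightarrow> P \<noteq> Q \<and> dist P Q = dist Q R \<and> dist Q R = dist R P"

definition tri_boundary :: "complex \<Rightarrow> complex \<Rightarrow> complex \<Rightarrow> complex set" where
  "tri_boundary A B C = closed_segment A B \<union> closed_segment B C \<union> closed_segment C A"

datatype side = SideA | SideB | SideC

fun side_seg :: "complex \<Rightarrow> complex \<Rightarrow> complex \<Rightarrow> side \<Rightarrow> complex set" where
  "side_seg A B C SideA = closed_segment B C"
| "side_seg A B C SideB = closed_segment C A"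
| "side_seg A B C SideC = closed_segment A B"

definition inscribed_eq_on_side ::
  "complex \<Rightarrow> complex \<Rightarrow> complex \<Rightarrow> side \<Rightarrow> complex \<Rightarrow> complex \<Rightarrow> complex \<Rightarrow> bool" where
  "inscribed_eq_on_side A B C x P Q R \<longleftrightarrow>
     equilateral P Q R \<and> P \<in> tri_boundary A B C \<and> Q \<in> tri_boundary A B C \<and>
     R \<in> tri_boundary A B C \<and> closed_segment P Q \<subseteq> side_seg A B C x"

definition admits_eq :: "complex \<Rightarrow> complex \<Rightarrow> complex \<Rightarrow> side \<Rightarrow> bool" where
  "admits_eq A B C x \<longleftrightarrow> (\<exists>P Q R. inscribed_eq_on_side A B C x P Q R)"

definition max_eq_area :: "complex \<Rightarrow> complex \<Rightarrow> complex \<Rightarrow> side \<Rightarrow> real" where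
  "max_eq_area A B C x =
     Sup {tri_area P Q R | P Q R. inscribed_eq_on_side A B C x P Q R}"

definition max_sides :: "complex \<Rightarrow> complex \<Rightarrow> complex \<Rightarrow> side set" where
  "max_sides A B C = {x. admits_eq A B C x \<and>
     (\<forall>y. admits_eq A B C y \<longrightarrow> max_eq_area A B C y \<le> max_eq_area A B C x)}"

definition min_sides :: "complex \<Rightarrow> complex \<Rightarrow> complex \<Rightarrow> side set" where
  "min_sides A B C = {x. admits_eq A B C x \<and>
     (\<forall>y. admits_eq A B C y \<longrightarrow> max_eq_area A B C x \<le> max_eq_area A B C y)}"

end

theory Submission
  imports Defs
begin

text \<open>
  An equilateral triangle with a side \<open>PQ\<close> on the side \<open>UV\<close> of a triangle \<open>UVW\<close> has its
  third vertex on \<open>UW\<close> or on \<open>VW\<close>. Move \<open>U\<close> to \<open>0\<close>, \<open>V\<close> to \<open>L > 0\<close> and \<open>W\<close> to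
  \<open>p + i q\<close> with \<open>q > 0\<close> by a congruence. An apex \<open>R = t W\<close> over the real base \<open>[x, y]\<close> is
  \<open>((x + y) / 2, \<surd>3 / 2 \<bar>x - y\<bar>)\<close>, so the base lies in \<open>[0, L]\<close> iff \<open>q \<le> \<surd>3 p\<close> (the angle
  at \<open>U\<close> is at most 60 degrees) and \<open>t (p + q / \<surd>3) \<le> L\<close>, and the largest side is
  \<open>min (2 q / \<surd>3) (2 L q / (\<surd>3 p + q))\<close>.

  For the triangle \<open>ABC\<close> this expresses the three maximal areas through the side lengths, the
  dot products \<open>dX\<close> of the edge vectors at the vertices and twice the area \<open>D\<close>. These satisfy
  \<open>dA + dB = c\<^sup>2\<close> etc. and \<open>dA\<^sup>2 + D\<^sup>2 = b\<^sup>2 c\<^sup>2\<close> etc., the angle at \<open>X\<close> is below 60 degrees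
  iff \<open>D < \<surd>3 dX\<close>, and the angle at \<open>A\<close> is at least 120 degrees iff \<open>2 dA + b c \<le> 0\<close>; the
  comparisons of the areas then become polynomial inequalities in these invariants.
\<close>

section \<open>Equilateral triangles\<close>

lemma dist_complex_squared: "(dist z w)\<^sup>2 = (Re z - Re w)\<^sup>2 + (Im z - Im w)\<^sup>2"
  by (simp add: dist_norm cmod_power2)

lemma equilateral_area:
  assumes "equilateral P Q R"
  shows "tri_area P Q R = sqrt 3 / 4 * (dist P Q)\<^sup>2"
proof -
  define s where "s = dist P Q"
  have e1: "(Re P - Re Q)\<^sup>2 + (Im P - Im Q)\<^sup>2 = s\<^sup>2"
    using dist_complex_squared[of P Q] by (simp add: s_def)
  have e2: "(Re Q - Re R)\<^sup>2 + (Im Q - Im R)\<^sup>2 = s\<^sup>2"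
    using dist_complex_squared[of Q R] assms by (simp add: s_def equilateral_def)
  have e3: "(Re R - Re P)\<^sup>2 + (Im R - Im P)\<^sup>2 = s\<^sup>2"
    using dist_complex_squared[of R P] assms by (simp add: s_def equilateral_def)
  define z where "z = Im ((Q - P) * cnj (R - P))"
  have z: "z = (Im Q - Im P) * (Re R - Re P) - (Re Q - Re P) * (Im R - Im P)"
    by (simp add: z_def algebra_simps)
  have "z\<^sup>2 = 3 / 4 * (s\<^sup>2)\<^sup>2"
    unfolding z using e1 e2 e3 by (simp add: power2_eq_square) algebra
  then have "z\<^sup>2 = (sqrt 3 / 2 * s\<^sup>2)\<^sup>2" by (simp add: power_mult_distrib power_divide)
  then have "\<bar>z\<bar> = sqrt 3 / 2 * s\<^sup>2"
    using power2_eq_iff_nonneg[of "\<bar>z\<bar>" "sqrt 3 / 2 * s\<^sup>2"] by simp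
  then show ?thesis by (simp add: tri_area_def z_def s_def)
qed

lemma equilateral_not_collinear:
  assumes "equilateral P Q R"
  shows "\<not> collinear {P, Q, R}"
proof
  assume "collinear {P, Q, R}"
  then have "between (Q, R) P \<or> between (R, P) Q \<or> between (P, Q) R"
    by (simp add: collinear_between_cases)
  then have "dist P Q = 2 * dist P Q"
    using assms by (auto simp: equilateral_def between dist_commute)
  then show False using assms by (simp add: equilateral_def)
qed

lemma apex_equidistant_iff:
  fixes x y m h :: real
  assumes "x \<noteq> y"
  shows "(x - m)\<^sup>2 + h\<^sup>2 = (x - y)\<^sup>2 \<and> (y - m)\<^sup>2 + h\<^sup>2 = (x - y)\<^sup>2 \<longleftrightarrow>
    m = (x + y) / 2 \<and> h\<^sup>2 = 3 / 4 * (x - y)\<^sup>2"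
proof
  assume E: "(x - m)\<^sup>2 + h\<^sup>2 = (x - y)\<^sup>2 \<and> (y - m)\<^sup>2 + h\<^sup>2 = (x - y)\<^sup>2"
  have "(x - y) * (x + y - 2 * m) = (x - m)\<^sup>2 - (y - m)\<^sup>2"
    by (simp add: power2_eq_square algebra_simps)
  also have "\<dots> = 0" using E by linarith
  finally have m: "m = (x + y) / 2" using assms by simp
  then have xm: "x - m = (x - y) / 2" by (simp add: field_simps)
  have "h\<^sup>2 = (x - y)\<^sup>2 - (x - m)\<^sup>2" using E by linarith
  then have "h\<^sup>2 = (x - y)\<^sup>2 - ((x - y) / 2)\<^sup>2" by (simp only: xm)
  then show "m = (x + y) / 2 \<and> h\<^sup>2 = 3 / 4 * (x - y)\<^sup>2" using m by (simp add: power_divide)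
next
  assume H: "m = (x + y) / 2 \<and> h\<^sup>2 = 3 / 4 * (x - y)\<^sup>2"
  then have xm: "x - m = (x - y) / 2" and ym: "y - m = - ((x - y) / 2)"
    by (simp_all add: field_simps)
  show "(x - m)\<^sup>2 + h\<^sup>2 = (x - y)\<^sup>2 \<and> (y - m)\<^sup>2 + h\<^sup>2 = (x - y)\<^sup>2"
    unfolding xm ym H[THEN conjunct2] by (simp add: power_divide)
qed

lemma equilateral_on_real_axis_iff:
  assumes "x \<noteq> y" "0 \<le> Im R"
  shows "equilateral (of_real x) (of_real y) R \<longleftrightarrow>
    Re R = (x + y) / 2 \<and> Im R = sqrt 3 / 2 * \<bar>x - y\<bar>"
proof -
  have dx: "(dist (of_real x) R)\<^sup>2 = (x - Re R)\<^sup>2 + (Im R)\<^sup>2"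
   and dy: "(dist (of_real y) R)\<^sup>2 = (y - Re R)\<^sup>2 + (Im R)\<^sup>2"
    using dist_complex_squared[of "of_real x" R] dist_complex_squared[of "of_real y" R] by simp_all
  have "dist (complex_of_real x) (of_real y) = \<bar>x - y\<bar>"
    by (simp add: dist_norm flip: of_real_diff)
  then have "equilateral (of_real x) (of_real y) R \<longleftrightarrow>
      \<bar>x - y\<bar> = dist (of_real y) R \<and> dist (of_real y) R = dist (of_real x) R"
    using assms(1) by (simp add: equilateral_def dist_commute)
  also have "\<dots> \<longleftrightarrow> \<bar>x - y\<bar>\<^sup>2 = (dist (of_real y) R)\<^sup>2 \<and> (dist (of_real y) R)\<^sup>2 = (dist (of_real x) R)\<^sup>2"
    by (metis abs_ge_zero zero_le_dist power2_eq_iff_nonneg)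
  also have "\<dots> \<longleftrightarrow> (x - Re R)\<^sup>2 + (Im R)\<^sup>2 = (x - y)\<^sup>2 \<and> (y - Re R)\<^sup>2 + (Im R)\<^sup>2 = (x - y)\<^sup>2"
    unfolding dx dy power2_abs by auto
  also have "\<dots> \<longleftrightarrow> Re R = (x + y) / 2 \<and> (Im R)\<^sup>2 = 3 / 4 * (x - y)\<^sup>2"
    by (rule apex_equidistant_iff[OF assms(1)])
  also have "\<dots> \<longleftrightarrow> Re R = (x + y) / 2 \<and> (Im R)\<^sup>2 = (sqrt 3 / 2 * \<bar>x - y\<bar>)\<^sup>2"
    by (simp add: power_mult_distrib power_divide power2_abs)
  also have "\<dots> \<longleftrightarrow> Re R = (x + y) / 2 \<and> Im R = sqrt 3 / 2 * \<bar>x - y\<bar>"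
    using assms(2) by (simp add: power2_eq_iff_nonneg)
  finally show ?thesis .
qed

lemma mem_closed_segment_0_of_real:
  assumes "0 \<le> L"
  shows "z \<in> closed_segment 0 (of_real L) \<longleftrightarrow> Im z = 0 \<and> 0 \<le> Re z \<and> Re z \<le> L"
proof -
  have "closed_segment 0 (of_real L) = complex_of_real ` {0..L}"
    using closed_segment_linear_image[OF linear_of_real, of 0 L] assms
    by (simp add: closed_segment_eq_real_ivl)
  then show ?thesis by (auto simp: complex_eq_iff intro!: image_eqI[of z _ "Re z"])
qed

section \<open>Area, dot products and angles\<close>

lemma tri_area_pos:
  assumes "\<not> collinear {U, V, W}"
  shows "0 < tri_area U V W"
proof -
  have "Im ((V - U) * cnj (W - U)) \<noteq> 0"
  proof
    assume "Im ((V - U) * cnj (W - U)) = 0"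
    then have "Im ((W - U) / (V - U)) = 0" by (simp add: Im_divide algebra_simps)
    then have "collinear {0, V - U, W - U}"
      by (simp add: collinear_iff_Reals complex_is_Real_iff)
    then have "collinear {V, U, W}" by (subst collinear_3) auto
    then show False using assms by (simp add: insert_commute)
  qed
  then show ?thesis by (simp add: tri_area_def)
qed

lemma tri_area_swap: "tri_area V U W = tri_area U V W"
  unfolding tri_area_def by (simp add: abs_minus_commute algebra_simps)

lemma tri_area_rotate: "tri_area V W U = tri_area U V W"
  unfolding tri_area_def by (simp add: abs_minus_commute algebra_simps)

lemma inner_sum_eq_dist_squared:
  fixes U V W :: "'a :: real_inner"
  shows "(W - U) \<bullet> (V - U) + (W - V) \<bullet> (U - V) = (dist U V)\<^sup>2"
proof -
  have "(W - U) \<bullet> (V - U) + (W - V) \<bullet> (U - V) = (V - U) \<bullet> (V - U)"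
    by (simp add: inner_diff_left inner_diff_right inner_commute)
  then show ?thesis by (metis dist_commute dist_norm power2_norm_eq_inner)
qed

lemma inner_squared_add_area_squared:
  "((V - U) \<bullet> (W - U))\<^sup>2 + (2 * tri_area U V W)\<^sup>2 = (dist U V * dist U W)\<^sup>2"
  by (simp add: tri_area_def inner_complex_def dist_norm cmod_power2 power_mult_distrib
      norm_minus_commute[of U])
    (simp add: power2_eq_square algebra_simps)

lemma less_iff_power2_less:
  fixes x y :: real
  assumes "0 \<le> x" "0 \<le> y"
  shows "x < y \<longleftrightarrow> x\<^sup>2 < y\<^sup>2"
  using power_strict_mono[of x y 2] power_less_imp_less_base[of x 2 y] assms by auto

lemma sqrt3_mult_compare:
  fixes d D N :: real
  assumes "0 < D" "0 < N" "d\<^sup>2 + D\<^sup>2 = N\<^sup>2"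
  shows "D < sqrt 3 * d \<longleftrightarrow> N < 2 * d" "D = sqrt 3 * d \<longleftrightarrow> N = 2 * d"
proof -
  have sq: "(sqrt 3 * d)\<^sup>2 = 3 * d\<^sup>2" "(2 * d)\<^sup>2 = 4 * d\<^sup>2" by (simp_all add: power_mult_distrib)
  have "D < sqrt 3 * d \<longleftrightarrow> 0 < d \<and> D\<^sup>2 < 3 * d\<^sup>2"
    using less_iff_power2_less[of D "sqrt 3 * d"] assms(1) sq
    by (smt (verit, best) real_sqrt_gt_zero zero_less_mult_iff)
  moreover have "N < 2 * d \<longleftrightarrow> 0 < d \<and> N\<^sup>2 < 4 * d\<^sup>2"
    using less_iff_power2_less[of N "2 * d"] assms(2) sq by auto
  ultimately show "D < sqrt 3 * d \<longleftrightarrow> N < 2 * d" using assms(3) by linarith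
  have "D = sqrt 3 * d \<longleftrightarrow> 0 < d \<and> D\<^sup>2 = 3 * d\<^sup>2"
    using power2_eq_iff_nonneg[of D "sqrt 3 * d"] assms(1) sq
    by (smt (verit, best) real_sqrt_gt_zero zero_less_mult_iff)
  moreover have "N = 2 * d \<longleftrightarrow> 0 < d \<and> N\<^sup>2 = 4 * d\<^sup>2"
    using power2_eq_iff_nonneg[of N "2 * d"] assms(2) sq by auto
  ultimately show "D = sqrt 3 * d \<longleftrightarrow> N = 2 * d" using assms(3) by linarith
qed

lemma tri_angle_eq_arccos:
  "tri_angle X V Y = arccos (((X - V) \<bullet> (Y - V)) / (dist X V * dist Y V))"
  and tri_angle_cos_bound: "\<bar>((X - V) \<bullet> (Y - V)) / (dist X V * dist Y V)\<bar> \<le> 1"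
proof -
  show "tri_angle X V Y = arccos (((X - V) \<bullet> (Y - V)) / (dist X V * dist Y V))"
    by (simp add: tri_angle_def vec_angle_def dist_norm)
  have "\<bar>(X - V) \<bullet> (Y - V)\<bar> \<le> dist X V * dist Y V"
    using Cauchy_Schwarz_ineq2[of "X - V" "Y - V"] by (simp add: dist_norm)
  then show "\<bar>((X - V) \<bullet> (Y - V)) / (dist X V * dist Y V)\<bar> \<le> 1"
    by (cases "dist X V * dist Y V = 0") (simp_all add: abs_div divide_le_eq_1)
qed

lemma arccos_compare_pi_div_3:
  fixes x :: real
  assumes "\<bar>x\<bar> \<le> 1"
  shows "arccos x < pi / 3 \<longleftrightarrow> 1 / 2 < x" "arccos x = pi / 3 \<longleftrightarrow> x = 1 / 2"
    "2 * pi / 3 < arccos x \<longleftrightarrow> x < - 1 / 2" "arccos x = 2 * pi / 3 \<longleftrightarrow> x = - 1 / 2"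
    "arccos x < 2 * pi / 3 \<longleftrightarrow> - 1 / 2 < x"
proof -
  have h: "arccos (- 1 / 2) = 2 * pi / 3" using arccos_minus[of "1 / 2"] by simp
  show "arccos x < pi / 3 \<longleftrightarrow> 1 / 2 < x" using arccos_less_mono[of x "1 / 2"] assms by simp
  show "arccos x = pi / 3 \<longleftrightarrow> x = 1 / 2" using arccos_eq_iff[of x "1 / 2"] assms by simp
  show "2 * pi / 3 < arccos x \<longleftrightarrow> x < - 1 / 2" using arccos_less_mono[of "- 1 / 2" x] assms h by simp
  show "arccos x = 2 * pi / 3 \<longleftrightarrow> x = - 1 / 2" using arccos_eq_iff[of x "- 1 / 2"] assms h by simp
  show "arccos x < 2 * pi / 3 \<longleftrightarrow> - 1 / 2 < x" using arccos_less_mono[of x "- 1 / 2"] assms h by simp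
qed

lemma tri_angle_compare_pi_div_3:
  assumes "\<not> collinear {V, X, Y}"
  shows "tri_angle X V Y < pi / 3 \<longleftrightarrow> 2 * tri_area V X Y < sqrt 3 * ((X - V) \<bullet> (Y - V))"
    "tri_angle X V Y = pi / 3 \<longleftrightarrow> 2 * tri_area V X Y = sqrt 3 * ((X - V) \<bullet> (Y - V))"
proof -
  define N where "N = dist X V * dist Y V"
  have "X \<noteq> V" "Y \<noteq> V" using assms by (auto simp: collinear_2 insert_commute)
  then have N: "0 < N" by (simp add: N_def)
  have D: "0 < 2 * tri_area V X Y" using tri_area_pos[OF assms] by simp
  have lagrange: "((X - V) \<bullet> (Y - V))\<^sup>2 + (2 * tri_area V X Y)\<^sup>2 = N\<^sup>2"
    using inner_squared_add_area_squared[where U = V and V = X and W = Y] by (simp add: N_def dist_commute)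
  note cos = arccos_compare_pi_div_3[OF tri_angle_cos_bound[of X V Y], folded tri_angle_eq_arccos N_def]
  show "tri_angle X V Y < pi / 3 \<longleftrightarrow> 2 * tri_area V X Y < sqrt 3 * ((X - V) \<bullet> (Y - V))"
    using cos(1) sqrt3_mult_compare(1)[OF D N lagrange] N by (simp add: less_divide_eq mult.commute)
  show "tri_angle X V Y = pi / 3 \<longleftrightarrow> 2 * tri_area V X Y = sqrt 3 * ((X - V) \<bullet> (Y - V))"
    using cos(2) sqrt3_mult_compare(2)[OF D N lagrange] N by (auto simp: field_simps)
qed

lemma tri_angle_compare_2pi_div_3:
  assumes "X \<noteq> V" "Y \<noteq> V"
  defines "s \<equiv> 2 * ((X - V) \<bullet> (Y - V)) + dist X V * dist Y V"
  shows "2 * pi / 3 < tri_angle X V Y \<longleftrightarrow> s < 0" "tri_angle X V Y = 2 * pi / 3 \<longleftrightarrow> s = 0"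
    "tri_angle X V Y < 2 * pi / 3 \<longleftrightarrow> 0 < s"
proof -
  have N: "0 < dist X V * dist Y V" "dist X V * dist Y V \<noteq> 0" using assms by simp_all
  note cos = arccos_compare_pi_div_3[OF tri_angle_cos_bound[of X V Y], folded tri_angle_eq_arccos]
  show "2 * pi / 3 < tri_angle X V Y \<longleftrightarrow> s < 0" using cos(3) N by (auto simp: s_def field_simps)
  show "tri_angle X V Y = 2 * pi / 3 \<longleftrightarrow> s = 0" using cos(4) N by (auto simp: s_def field_simps)
  show "tri_angle X V Y < 2 * pi / 3 \<longleftrightarrow> 0 < s" using cos(5) N by (auto simp: s_def field_simps)
qed

section \<open>The largest equilateral triangle on a side\<close>

text \<open>
  For a triangle \<open>UVW\<close> with \<open>L = |UV|\<close>, \<open>d = (W - U) \<bullet> (V - U)\<close> and \<open>D\<close> twice its area,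
  \<open>max_eq_side L d D\<close> is the longest side of an equilateral triangle with a side on \<open>UV\<close> and
  third vertex on \<open>UW\<close>; there is none, and the value is \<open>0\<close>, if the angle at \<open>U\<close> exceeds
  60 degrees.
\<close>
definition max_eq_side :: "real \<Rightarrow> real \<Rightarrow> real \<Rightarrow> real" where
  "max_eq_side L d D =
     (if D \<le> sqrt 3 * d then min (2 * D / (sqrt 3 * L)) (2 * L * D / (sqrt 3 * d + D)) else 0)"

lemma max_eq_side_nonneg: "0 < L \<Longrightarrow> 0 < D \<Longrightarrow> 0 \<le> max_eq_side L d D"
  unfolding max_eq_side_def by (auto intro!: divide_nonneg_pos add_pos_nonneg)

lemma max_eq_side_scaled:
  assumes "0 < L" "q \<le> sqrt 3 * p"
  shows "max_eq_side L (L * p) (L * q) = min (2 * q / sqrt 3) (2 * L * q / (sqrt 3 * p + q))"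
proof -
  have "L * q \<le> sqrt 3 * (L * p)" using assms by (simp add: mult.left_commute)
  moreover have "2 * (L * q) / (sqrt 3 * L) = 2 * q / sqrt 3" using assms(1) by simp
  moreover have "2 * L * (L * q) / (sqrt 3 * (L * p) + L * q) = 2 * L * q / (sqrt 3 * p + q)"
    using assms(1) by (simp add: mult.left_commute flip: distrib_left)
  ultimately show ?thesis by (simp add: max_eq_side_def)
qed

lemma apex_height_bound:
  fixes L p q t s :: real
  assumes "0 < q" "t \<le> 1" "0 < s" "sqrt 3 * s = 2 * t * q" "s / 2 \<le> t * p" "t * p + s / 2 \<le> L"
  shows "L * q \<le> sqrt 3 * (L * p) \<and> s \<le> max_eq_side L (L * p) (L * q)"
proof -
  define r where "r = sqrt 3"
  have r: "0 < r" "r * r = 3" by (simp_all add: r_def)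
  have s: "s = 2 * t * q / r" using assms(4) r by (simp add: r_def field_simps)
  have t: "0 < t" using assms(1,3) s r by (simp add: zero_less_mult_iff zero_less_divide_iff)
  have "t * q \<le> t * (r * p)" using assms(5) s r by (simp add: field_simps)
  then have qp: "q \<le> r * p" using t by simp
  have L: "0 < L" using assms(3,5,6) by linarith
  have "s * (r * p + q) = 2 * q * (t * p + s / 2)" using s r by (simp add: field_simps)
  also have "\<dots> \<le> 2 * q * L" using assms(1,6) by simp
  finally have "s \<le> 2 * L * q / (r * p + q)"
    using qp assms(1) by (simp add: field_simps)
  moreover have "s \<le> 2 * q / r" using s assms(1,2) r by (simp add: divide_right_mono)
  ultimately show ?thesis
    using qp L max_eq_side_scaled[of L q p] by (simp add: r_def mult.left_commute)
qed

lemma apex_height_attained: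
  fixes L p q :: real
  assumes "0 < q" "0 < L" "q \<le> sqrt 3 * p"
  obtains t s where "0 \<le> t" "t \<le> 1" "0 < s" "sqrt 3 * s = 2 * t * q" "s / 2 \<le> t * p"
    "t * p + s / 2 \<le> L" "s = max_eq_side L (L * p) (L * q)"
proof -
  define r where "r = sqrt 3"
  have r: "0 < r" "r * r = 3" by (simp_all add: r_def)
  have den: "0 < r * p + q" using assms(1,3) by (simp add: r_def)
  define t where "t = min 1 (r * L / (r * p + q))"
  define s where "s = 2 * q / r * t"
  have "t \<le> r * L / (r * p + q)" by (simp add: t_def)
  then have t: "0 < t" "t \<le> 1" "t * (r * p + q) \<le> r * L"
    using r den assms(2) by (auto simp: t_def le_divide_eq)
  have "s / 2 \<le> t * p" using t(1) assms(3) r by (simp add: s_def r_def field_simps)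
  moreover have "t * p + s / 2 \<le> L" using t(3) r by (simp add: s_def field_simps)
  moreover have "s = min (2 * q / r) (2 * q / r * (r * L / (r * p + q)))"
    using r assms(1) by (simp add: s_def t_def min_mult_distrib_left)
  then have "s = max_eq_side L (L * p) (L * q)"
    using max_eq_side_scaled[OF assms(2,3)] r by (simp add: r_def mult_ac)
  moreover have "sqrt 3 * s = 2 * t * q" "0 < s" using r t(1) assms(1) by (simp_all add: s_def r_def)
  ultimately show ?thesis using that[of t s] t(1,2) by linarith
qed

lemma max_eq_side_eq:
  assumes "D \<le> sqrt 3 * d" "0 < D" "0 < L" "d + d' = L\<^sup>2"
  shows "max_eq_side L d D =
    (if D \<le> sqrt 3 * d' then 2 * D / (sqrt 3 * L) else 2 * L * D / (sqrt 3 * d + D))"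
proof -
  define r where "r = sqrt 3"
  have r: "0 < r" by (simp add: r_def)
  have den: "0 < r * d + D" using assms(1,2) by (simp add: r_def)
  have "2 * D / (r * L) \<le> 2 * L * D / (r * d + D) \<longleftrightarrow> (2 * D) * (r * d + D) \<le> (2 * D) * (r * L\<^sup>2)"
    using r assms(3) den by (simp add: field_simps power2_eq_square)
  also have "\<dots> \<longleftrightarrow> D \<le> r * d'"
    using assms(2,4) by (simp flip: assms(4) add: algebra_simps)
  finally show ?thesis using assms(1) unfolding max_eq_side_def r_def by (auto simp: min_def)
qed

definition eq_base_apex :: "complex \<Rightarrow> complex \<Rightarrow> complex \<Rightarrow> complex \<Rightarrow> complex \<Rightarrow> complex \<Rightarrow> bool" where
  "eq_base_apex U V W P Q R \<longleftrightarrow> equilateral P Q R \<and>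
     P \<in> closed_segment U V \<and> Q \<in> closed_segment U V \<and> R \<in> closed_segment U W"

lemma eq_base_apex_standard_bound:
  assumes "0 < Im w" "0 < L" "eq_base_apex 0 (of_real L) w P Q R"
  shows "L * Im w \<le> sqrt 3 * (L * Re w) \<and> dist P Q \<le> max_eq_side L (L * Re w) (L * Im w)"
proof -
  have eq: "equilateral P Q R" and PQ: "P \<in> closed_segment 0 (of_real L)" "Q \<in> closed_segment 0 (of_real L)"
    and "R \<in> closed_segment 0 w"
    using assms(3) by (auto simp: eq_base_apex_def)
  then obtain t where t: "0 \<le> t" "t \<le> 1" "R = t *\<^sub>R w"
    by (auto simp: in_segment)
  define x y where "x = Re P" and "y = Re Q"
  have xy: "P = of_real x" "Q = of_real y" "0 \<le> x" "x \<le> L" "0 \<le> y" "y \<le> L"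
    using PQ mem_closed_segment_0_of_real[of L] assms(2) by (auto simp: x_def y_def complex_eq_iff)
  have "x \<noteq> y" using eq xy by (auto simp: equilateral_def)
  moreover have "0 \<le> Im R" using t assms(1) by simp
  ultimately have R: "t * Re w = (x + y) / 2" "t * Im w = sqrt 3 / 2 * \<bar>x - y\<bar>"
    using eq equilateral_on_real_axis_iff[of x y R] by (simp_all add: xy t)
  have "dist P Q = \<bar>x - y\<bar>" by (simp add: xy dist_norm flip: of_real_diff)
  moreover have "L * Im w \<le> sqrt 3 * (L * Re w) \<and> \<bar>x - y\<bar> \<le> max_eq_side L (L * Re w) (L * Im w)"
  proof (rule apex_height_bound[where t = t])
    show "0 < \<bar>x - y\<bar>" "sqrt 3 * \<bar>x - y\<bar> = 2 * t * Im w"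
      using \<open>x \<noteq> y\<close> R(2) by simp_all
    show "\<bar>x - y\<bar> / 2 \<le> t * Re w" "t * Re w + \<bar>x - y\<bar> / 2 \<le> L"
      unfolding R(1) using xy(3-6) by (auto simp: abs_real_def field_simps)
  qed (use t assms(1) in auto)
  ultimately show ?thesis by simp
qed

lemma eq_base_apex_standard_exists:
  assumes "0 < Im w" "0 < L" "Im w \<le> sqrt 3 * Re w"
  shows "\<exists>P Q R. eq_base_apex 0 (of_real L) w P Q R \<and> dist P Q = max_eq_side L (L * Re w) (L * Im w)"
proof -
  obtain t s where ts: "0 \<le> t" "t \<le> 1" "0 < s" "sqrt 3 * s = 2 * t * Im w" "s / 2 \<le> t * Re w"
    "t * Re w + s / 2 \<le> L" "s = max_eq_side L (L * Re w) (L * Im w)"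
    using apex_height_attained[OF assms] .
  define x y where "x = t * Re w - s / 2" and "y = t * Re w + s / 2"
  have "x \<noteq> y" "\<bar>x - y\<bar> = s" using ts(3) by (simp_all add: x_def y_def)
  then have "equilateral (of_real x) (of_real y) (t *\<^sub>R w)"
    using equilateral_on_real_axis_iff[of x y "t *\<^sub>R w"] ts assms(1)
    by (simp add: x_def y_def field_simps)
  moreover have "of_real x \<in> closed_segment 0 (complex_of_real L)"
    "of_real y \<in> closed_segment 0 (complex_of_real L)"
    using ts assms(2) by (simp_all add: mem_closed_segment_0_of_real x_def y_def)
  moreover have "t *\<^sub>R w \<in> closed_segment 0 w" using ts(1,2) by (auto simp: in_segment)
  moreover have "dist (complex_of_real x) (of_real y) = s"
    using \<open>\<bar>x - y\<bar> = s\<close> by (simp add: dist_norm flip: of_real_diff)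
  ultimately show ?thesis using ts(7) unfolding eq_base_apex_def by blast
qed

lemma eq_base_apex_image:
  assumes "inj f" "\<And>x y. dist (f x) (f y) = dist x y"
    "\<And>x y. closed_segment (f x) (f y) = f ` closed_segment x y"
  shows "eq_base_apex (f U) (f V) (f W) (f P) (f Q) (f R) \<longleftrightarrow> eq_base_apex U V W P Q R"
  using assms by (simp add: eq_base_apex_def equilateral_def inj_image_mem_iff inj_eq)

lemma translated_isometry:
  assumes "linear g" "bij g" "\<And>x. norm (g x) = norm x"
  shows "bij (\<lambda>x. U + g x)" "dist (U + g x) (U + g y) = dist x y"
    "closed_segment (U + g x) (U + g y) = (\<lambda>x. U + g x) ` closed_segment x y"
proof -
  show "bij (\<lambda>x. U + g x)" using bij_comp[OF assms(2) bij_plus[of U]] by (simp add: comp_def)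
  show "dist (U + g x) (U + g y) = dist x y"
    using assms(3)[of "x - y"] linear_diff[OF assms(1)] by (simp add: dist_norm)
  show "closed_segment (U + g x) (U + g y) = (\<lambda>x. U + g x) ` closed_segment x y"
    by (simp add: closed_segment_translation closed_segment_linear_image[OF assms(1)] image_image)
qed

lemma unit_complex_mult_bij:
  fixes e :: complex
  assumes "norm e = 1"
  shows "bij (\<lambda>x. e * x)" "bij (\<lambda>x. e * cnj x)"
proof -
  have "e * cnj e = 1" using complex_norm_square[of e] assms by simp
  then have inv: "cnj e * (e * x) = x" "e * (cnj e * x) = x" for x
    by (simp_all add: mult.assoc[symmetric] mult.commute[of "cnj e"])
  show "bij (\<lambda>x. e * x)" by (rule o_bij[of "\<lambda>x. cnj e * x"]) (simp_all add: fun_eq_iff inv)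
  show "bij (\<lambda>x. e * cnj x)" by (rule o_bij[of "\<lambda>x. cnj (cnj e * x)"]) (simp_all add: fun_eq_iff inv)
qed

lemma congruent_to_standard_position:
  assumes "\<not> collinear {U, V, W}"
  obtains f w where "bij f" "\<And>x y. dist (f x) (f y) = dist x y"
    "\<And>x y. closed_segment (f x) (f y) = f ` closed_segment x y"
    "f 0 = U" "f (of_real (dist U V)) = V" "f w = W" "0 < Im w"
    "dist U V * Re w = (W - U) \<bullet> (V - U)" "dist U V * Im w = 2 * tri_area U V W"
proof -
  define L where "L = dist U V"
  have L: "0 < L" using assms by (auto simp: L_def)
  define e where "e = (V - U) / of_real L"
  have norm_e: "norm e = 1" and e: "e * of_real L = V - U"
    using L by (simp_all add: e_def norm_divide L_def dist_norm norm_minus_commute)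
  define z where "z = cnj (V - U) * (W - U) / of_real L"
  have "(V - U) * cnj (V - U) = of_real (L\<^sup>2)"
    using complex_norm_square[of "V - U"] by (simp add: L_def dist_norm norm_minus_commute)
  moreover have "e * z = (V - U) * cnj (V - U) * (W - U) / of_real (L\<^sup>2)"
    by (simp add: e_def z_def power2_eq_square)
  ultimately have ez: "e * z = W - U" using L by simp
  have "Re (cnj (V - U) * (W - U)) = (W - U) \<bullet> (V - U)"
    by (simp add: inner_complex_def algebra_simps)
  then have Re_z: "L * Re z = (W - U) \<bullet> (V - U)" using L by (simp add: z_def)
  have "\<bar>Im (cnj (V - U) * (W - U))\<bar> = 2 * tri_area U V W"
    by (simp add: tri_area_def abs_minus_commute algebra_simps)
  then have Im_z: "L * \<bar>Im z\<bar> = 2 * tri_area U V W" using L by (simp add: z_def abs_div)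
  have "Im z \<noteq> 0" using Im_z tri_area_pos[OF assms] L by auto
  have "linear (\<lambda>x. e * cnj x)"
    using linear_compose[OF linear_cnj linear_times[of e]] by (simp add: comp_def)
  note mult_e = translated_isometry[OF linear_times unit_complex_mult_bij(1)[OF norm_e]]
    and mult_e_cnj = translated_isometry[OF this unit_complex_mult_bij(2)[OF norm_e]]
  show thesis
  proof (cases "0 < Im z")
    case True
    show thesis
      by (rule that[of "\<lambda>x. U + e * x" z]) (use True Re_z Im_z e ez norm_e mult_e in
        \<open>simp_all add: norm_mult L_def\<close>)
  next
    case False
    then have "Im z < 0" using \<open>Im z \<noteq> 0\<close> by simp
    show thesis
      by (rule that[of "\<lambda>x. U + e * cnj x" "cnj z"]) (use \<open>Im z < 0\<close> Re_z Im_z e ez norm_e mult_e_cnj in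
        \<open>simp_all add: norm_mult L_def\<close>)
  qed
qed

definition max_eq_side_at :: "complex \<Rightarrow> complex \<Rightarrow> complex \<Rightarrow> real" where
  "max_eq_side_at U V W = max_eq_side (dist U V) ((W - U) \<bullet> (V - U)) (2 * tri_area U V W)"

lemma eq_base_apex_bound:
  assumes "\<not> collinear {U, V, W}" "eq_base_apex U V W P Q R"
  shows "2 * tri_area U V W \<le> sqrt 3 * ((W - U) \<bullet> (V - U)) \<and> dist P Q \<le> max_eq_side_at U V W"
proof -
  obtain f w where f: "bij f" "\<And>x y. dist (f x) (f y) = dist x y"
    "\<And>x y. closed_segment (f x) (f y) = f ` closed_segment x y"
    "f 0 = U" "f (of_real (dist U V)) = V" "f w = W" "0 < Im w"
    and w: "dist U V * Re w = (W - U) \<bullet> (V - U)" "dist U V * Im w = 2 * tri_area U V W"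
    using congruent_to_standard_position[OF assms(1)] by blast
  obtain P' Q' R' where PQR: "P = f P'" "Q = f Q'" "R = f R'"
    using bij_is_surj[OF f(1)] by (metis surjD)
  have "eq_base_apex (f 0) (f (of_real (dist U V))) (f w) (f P') (f Q') (f R')"
    using assms(2) by (simp only: f(4-6) PQR)
  then have "eq_base_apex 0 (of_real (dist U V)) w P' Q' R'"
    by (simp only: eq_base_apex_image[OF bij_is_inj[OF f(1)] f(2,3)])
  moreover have "0 < dist U V" using assms(1) by auto
  ultimately have "dist U V * Im w \<le> sqrt 3 * (dist U V * Re w) \<and>
      dist P' Q' \<le> max_eq_side (dist U V) (dist U V * Re w) (dist U V * Im w)"
    using eq_base_apex_standard_bound[OF f(7)] by blast
  then show ?thesis by (simp only: w PQR f(2) max_eq_side_at_def)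
qed

lemma eq_base_apex_exists:
  assumes "\<not> collinear {U, V, W}" "2 * tri_area U V W \<le> sqrt 3 * ((W - U) \<bullet> (V - U))"
  shows "\<exists>P Q R. eq_base_apex U V W P Q R \<and> dist P Q = max_eq_side_at U V W"
proof -
  obtain f w where f: "bij f" "\<And>x y. dist (f x) (f y) = dist x y"
    "\<And>x y. closed_segment (f x) (f y) = f ` closed_segment x y"
    "f 0 = U" "f (of_real (dist U V)) = V" "f w = W" "0 < Im w"
    and w: "dist U V * Re w = (W - U) \<bullet> (V - U)" "dist U V * Im w = 2 * tri_area U V W"
    using congruent_to_standard_position[OF assms(1)] by blast
  have L: "0 < dist U V" using assms(1) by auto
  then have "Im w \<le> sqrt 3 * Re w"
    using assms(2) by (simp flip: w add: mult.left_commute)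
  then obtain P Q R where "eq_base_apex 0 (of_real (dist U V)) w P Q R"
    and "dist P Q = max_eq_side_at U V W"
    using eq_base_apex_standard_exists[OF f(7) L] by (auto simp: w max_eq_side_at_def)
  then show ?thesis
    using eq_base_apex_image[OF bij_is_inj[OF f(1)] f(2,3)] by (metis f(2,4-6))
qed

lemma inscribed_eq_on_SideC_iff:
  "inscribed_eq_on_side U V W SideC P Q R \<longleftrightarrow> eq_base_apex U V W P Q R \<or> eq_base_apex V U W P Q R"
proof
  assume ins: "inscribed_eq_on_side U V W SideC P Q R"
  then have eq: "equilateral P Q R" and PQ: "P \<in> closed_segment U V" "Q \<in> closed_segment U V"
    by (auto simp: inscribed_eq_on_side_def subset_closed_segment)
  have "R \<notin> closed_segment U V"
  proof
    assume "R \<in> closed_segment U V"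
    then have "collinear {P, Q, R}"
      using PQ collinear_subset[OF collinear_closed_segment[of U V]] by auto
    then show False using equilateral_not_collinear[OF eq] by simp
  qed
  then have "R \<in> closed_segment U W \<or> R \<in> closed_segment V W"
    using ins by (auto simp: inscribed_eq_on_side_def tri_boundary_def closed_segment_commute)
  then show "eq_base_apex U V W P Q R \<or> eq_base_apex V U W P Q R"
    using eq PQ by (auto simp: eq_base_apex_def closed_segment_commute)
next
  assume "eq_base_apex U V W P Q R \<or> eq_base_apex V U W P Q R"
  then show "inscribed_eq_on_side U V W SideC P Q R"
    by (auto simp: eq_base_apex_def inscribed_eq_on_side_def tri_boundary_def subset_closed_segment
        closed_segment_commute)
qed

lemma admits_eq_SideC_iff:
  assumes "\<not> collinear {U, V, W}"
  shows "admits_eq U V W SideC \<longleftrightarrow>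
    2 * tri_area U V W \<le> sqrt 3 * ((W - U) \<bullet> (V - U)) \<or>
    2 * tri_area U V W \<le> sqrt 3 * ((W - V) \<bullet> (U - V))"
proof -
  have VUW: "\<not> collinear {V, U, W}" using assms by (simp add: insert_commute)
  show ?thesis
    unfolding admits_eq_def inscribed_eq_on_SideC_iff
    using eq_base_apex_bound[OF assms] eq_base_apex_bound[OF VUW]
      eq_base_apex_exists[OF assms] eq_base_apex_exists[OF VUW]
    by (metis tri_area_swap)
qed

lemma inscribed_eq_on_SideC_longest:
  assumes "\<not> collinear {U, V, W}" "admits_eq U V W SideC"
  shows "\<exists>P Q R. inscribed_eq_on_side U V W SideC P Q R \<and>
      dist P Q = max (max_eq_side_at U V W) (max_eq_side_at V U W)"
    and "inscribed_eq_on_side U V W SideC P Q R \<Longrightarrow>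
      dist P Q \<le> max (max_eq_side_at U V W) (max_eq_side_at V U W)"
proof -
  have VUW: "\<not> collinear {V, U, W}" using assms(1) by (simp add: insert_commute)
  have "0 < dist U V" "0 < 2 * tri_area U V W" using assms(1) tri_area_pos by auto
  then have G: "0 \<le> max_eq_side_at U V W" "0 \<le> max_eq_side_at V U W"
    using max_eq_side_nonneg by (simp_all add: max_eq_side_at_def dist_commute tri_area_swap)
  have "max_eq_side_at U V W = 0" if "\<not> 2 * tri_area U V W \<le> sqrt 3 * ((W - U) \<bullet> (V - U))"
    using that by (simp add: max_eq_side_at_def max_eq_side_def)
  moreover have "max_eq_side_at V U W = 0" if "\<not> 2 * tri_area U V W \<le> sqrt 3 * ((W - V) \<bullet> (U - V))"
    using that by (simp add: max_eq_side_at_def max_eq_side_def tri_area_swap)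
  ultimately consider
      "2 * tri_area U V W \<le> sqrt 3 * ((W - U) \<bullet> (V - U))" "max_eq_side_at V U W \<le> max_eq_side_at U V W"
    | "2 * tri_area U V W \<le> sqrt 3 * ((W - V) \<bullet> (U - V))" "max_eq_side_at U V W \<le> max_eq_side_at V U W"
    using assms(2) G unfolding admits_eq_SideC_iff[OF assms(1)] by force
  then show "\<exists>P Q R. inscribed_eq_on_side U V W SideC P Q R \<and>
      dist P Q = max (max_eq_side_at U V W) (max_eq_side_at V U W)"
  proof cases
    case 1
    then show ?thesis
      using eq_base_apex_exists[OF assms(1)] by (metis inscribed_eq_on_SideC_iff max.absorb1)
  next
    case 2
    then show ?thesis
      using eq_base_apex_exists[OF VUW] by (metis inscribed_eq_on_SideC_iff max.absorb2 tri_area_swap)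
  qed
  show "inscribed_eq_on_side U V W SideC P Q R \<Longrightarrow>
      dist P Q \<le> max (max_eq_side_at U V W) (max_eq_side_at V U W)"
    using eq_base_apex_bound[OF assms(1)] eq_base_apex_bound[OF VUW]
    unfolding inscribed_eq_on_SideC_iff by (fastforce simp: dist_commute)
qed

lemma max_eq_area_SideC:
  assumes "\<not> collinear {U, V, W}" "admits_eq U V W SideC"
  shows "max_eq_area U V W SideC =
    sqrt 3 / 4 * (max (max_eq_side_at U V W) (max_eq_side_at V U W))\<^sup>2"
  unfolding max_eq_area_def
proof (rule cSup_eq_maximum)
  show "sqrt 3 / 4 * (max (max_eq_side_at U V W) (max_eq_side_at V U W))\<^sup>2 \<in>
      {tri_area P Q R |P Q R. inscribed_eq_on_side U V W SideC P Q R}"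
    using inscribed_eq_on_SideC_longest(1)[OF assms]
    by (force simp: inscribed_eq_on_side_def equilateral_area)
next
  fix x assume "x \<in> {tri_area P Q R |P Q R. inscribed_eq_on_side U V W SideC P Q R}"
  then obtain P Q R where ins: "inscribed_eq_on_side U V W SideC P Q R" and x: "x = tri_area P Q R"
    by blast
  have "(dist P Q)\<^sup>2 \<le> (max (max_eq_side_at U V W) (max_eq_side_at V U W))\<^sup>2"
    using inscribed_eq_on_SideC_longest(2)[OF assms ins] by (simp add: power_mono)
  then show "x \<le> sqrt 3 / 4 * (max (max_eq_side_at U V W) (max_eq_side_at V U W))\<^sup>2"
    using ins by (simp add: x inscribed_eq_on_side_def equilateral_area)
qed

lemma inscribed_eq_on_side_rotate:
  "inscribed_eq_on_side A B C SideA = inscribed_eq_on_side B C A SideC"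
  "inscribed_eq_on_side A B C SideB = inscribed_eq_on_side C A B SideC"
  by (auto simp: fun_eq_iff inscribed_eq_on_side_def tri_boundary_def)

lemma admits_eq_rotate:
  "admits_eq A B C SideA = admits_eq B C A SideC" "admits_eq A B C SideB = admits_eq C A B SideC"
  by (simp_all add: admits_eq_def inscribed_eq_on_side_rotate)

lemma max_eq_area_rotate:
  "max_eq_area A B C SideA = max_eq_area B C A SideC" "max_eq_area A B C SideB = max_eq_area C A B SideC"
  by (simp_all add: max_eq_area_def inscribed_eq_on_side_rotate)

section \<open>Comparing the three sides\<close>

text \<open>
  \<open>a, b, c\<close> are the sides opposite \<open>A, B, C\<close>, \<open>dX\<close> is the dot product of the two edge
  vectors at \<open>X\<close> (the product of the adjacent sides times \<open>cos X\<close>) and \<open>D\<close> is twice the area.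
\<close>
locale triangle_invariants =
  fixes a b c dA dB dC D :: real
  assumes b_less_a: "b < a" and c_less_b: "c < b" and c_pos: "0 < c" and D_pos: "0 < D"
    and sum_AB: "dA + dB = c\<^sup>2" and sum_BC: "dB + dC = a\<^sup>2" and sum_CA: "dA + dC = b\<^sup>2"
    and lagrange_A: "dA\<^sup>2 + D\<^sup>2 = (b * c)\<^sup>2" and lagrange_B: "dB\<^sup>2 + D\<^sup>2 = (a * c)\<^sup>2"
    and lagrange_C: "dC\<^sup>2 + D\<^sup>2 = (a * b)\<^sup>2"
begin

definition "max_side_a = max (max_eq_side a dB D) (max_eq_side a dC D)"
definition "max_side_b = max (max_eq_side b dC D) (max_eq_side b dA D)"
definition "max_side_c = max (max_eq_side c dA D) (max_eq_side c dB D)"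

lemma sides_pos: "0 < a" "0 < b" using b_less_a c_less_b c_pos by auto

lemma D_less_sqrt3_dC: "D < sqrt 3 * dC"
proof -
  have "b\<^sup>2 > c\<^sup>2" using c_less_b c_pos by (simp add: power_strict_mono)
  moreover have "a\<^sup>2 > a * b" using b_less_a sides_pos by (simp add: power2_eq_square)
  ultimately have "a * b < 2 * dC" using sum_AB sum_BC sum_CA by linarith
  then show ?thesis using sqrt3_mult_compare(1)[OF D_pos _ lagrange_C] sides_pos by simp
qed

lemma sqrt3_dA_less_D: "sqrt 3 * dA < D"
proof -
  have "a\<^sup>2 > b\<^sup>2" using b_less_a c_less_b c_pos by (simp add: power_strict_mono)
  moreover have "c\<^sup>2 < b * c" using c_less_b c_pos by (simp add: power2_eq_square)
  ultimately have "2 * dA < b * c" using sum_AB sum_BC sum_CA by linarith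
  then show ?thesis
    using sqrt3_mult_compare[OF D_pos _ lagrange_A] sides_pos c_pos by fastforce
qed

lemma max_side_a_eq:
  "max_side_a = (if D \<le> sqrt 3 * dB then 2 * D / (sqrt 3 * a) else 2 * a * D / (sqrt 3 * dC + D))"
proof -
  have "max_eq_side a dC D = (if D \<le> sqrt 3 * dB then 2 * D / (sqrt 3 * a) else 2 * a * D / (sqrt 3 * dC + D))"
    using max_eq_side_eq[of D dC a dB] D_less_sqrt3_dC D_pos sides_pos sum_BC by (simp add: add.commute)
  moreover have "max_eq_side a dB D \<le> max_eq_side a dC D"
    using calculation max_eq_side_eq[of D dB a dC] D_pos sides_pos sum_BC D_less_sqrt3_dC
    by (auto simp: max_eq_side_def)
  ultimately show ?thesis by (simp add: max_side_a_def)
qed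


lemma max_side_b_eq: "max_side_b = 2 * b * D / (sqrt 3 * dC + D)"
proof -
  have "max_eq_side b dA D = 0" using sqrt3_dA_less_D by (simp add: max_eq_side_def)
  moreover have "max_eq_side b dC D = 2 * b * D / (sqrt 3 * dC + D)"
    using max_eq_side_eq[of D dC b dA] D_less_sqrt3_dC D_pos sides_pos sum_CA sqrt3_dA_less_D
    by (simp add: add.commute)
  moreover have "0 \<le> 2 * b * D / (sqrt 3 * dC + D)"
    using D_less_sqrt3_dC D_pos sides_pos by simp
  ultimately show ?thesis by (simp add: max_side_b_def)
qed

lemma max_side_c_eq:
  assumes "D \<le> sqrt 3 * dB"
  shows "max_side_c = 2 * c * D / (sqrt 3 * dB + D)"
proof -
  have "max_eq_side c dA D = 0" using sqrt3_dA_less_D by (simp add: max_eq_side_def)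
  moreover have "max_eq_side c dB D = 2 * c * D / (sqrt 3 * dB + D)"
    using max_eq_side_eq[of D dB c dA] assms D_pos c_pos sum_AB sqrt3_dA_less_D
    by (simp add: add.commute)
  moreover have "0 \<le> 2 * c * D / (sqrt 3 * dB + D)" using assms D_pos c_pos by simp
  ultimately show ?thesis by (simp add: max_side_c_def)
qed

lemma max_side_b_pos: "0 < max_side_b"
  using max_side_b_eq D_less_sqrt3_dC D_pos sides_pos by simp

lemma max_side_b_less_a: "max_side_b < max_side_a"
proof (cases "D \<le> sqrt 3 * dB")
  case True
  define r where "r = sqrt 3"
  have r: "0 < r" "r * r = 3" by (simp_all add: r_def)
  have den: "0 < r * dC + D" using D_less_sqrt3_dC D_pos by (simp add: r_def)
  have "(r * dC + D)\<^sup>2 - (r * (a * b))\<^sup>2 = 2 * D * (r * dC - D)"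
    using lagrange_C r(2) by algebra
  moreover have "0 < 2 * D * (r * dC - D)" using D_less_sqrt3_dC D_pos by (simp add: r_def)
  ultimately have "r * (a * b) < r * dC + D"
    using less_iff_power2_less[of "r * (a * b)" "r * dC + D"] r sides_pos den by simp
  then have "2 * D * (r * (a * b)) < 2 * D * (r * dC + D)" using D_pos by simp
  then have "2 * b * D / (r * dC + D) < 2 * D / (r * a)"
    using den r sides_pos by (simp add: field_simps)
  then show ?thesis using True by (simp add: max_side_a_eq max_side_b_eq r_def)
next
  case False
  have "0 < sqrt 3 * dC + D" using D_less_sqrt3_dC D_pos by simp
  then have "2 * b * D / (sqrt 3 * dC + D) < 2 * a * D / (sqrt 3 * dC + D)"
    using b_less_a D_pos by (simp add: divide_strict_right_mono)
  then show ?thesis using False by (simp add: max_side_a_eq max_side_b_eq)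
qed

lemma max_side_c_le_a:
  assumes "D \<le> sqrt 3 * dB"
  shows "max_side_c \<le> max_side_a" "max_side_c = max_side_a \<longleftrightarrow> D = sqrt 3 * dB"
proof -
  define r where "r = sqrt 3"
  have r: "0 < r" "r * r = 3" by (simp_all add: r_def)
  have den: "0 < r * dB + D" using assms D_pos by (simp add: r_def add_nonneg_pos)
  have ra: "0 < r * a" using r sides_pos by simp
  have id: "(r * dB + D)\<^sup>2 - (r * (a * c))\<^sup>2 = 2 * D * (r * dB - D)"
    using lagrange_B r(2) by algebra
  have "0 \<le> 2 * D * (r * dB - D)" using assms D_pos by (simp add: r_def)
  then have "(r * (a * c))\<^sup>2 \<le> (r * dB + D)\<^sup>2" using id by linarith
  then have le: "r * (a * c) \<le> r * dB + D" using den by (simp add: power2_le_iff_abs_le)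
  have eq: "r * (a * c) = r * dB + D \<longleftrightarrow> r * dB = D"
  proof
    assume "r * (a * c) = r * dB + D"
    then have "2 * D * (r * dB - D) = 0" using id by simp
    then show "r * dB = D" using D_pos by simp
  next
    assume "r * dB = D"
    then have "(r * (a * c))\<^sup>2 = (r * dB + D)\<^sup>2" using id by simp
    then show "r * (a * c) = r * dB + D"
      using den r sides_pos c_pos by (simp add: power2_eq_iff_nonneg)
  qed
  have a: "max_side_a = 2 * D / (r * a)" and c: "max_side_c = 2 * c * D / (r * dB + D)"
    using assms by (simp_all add: max_side_a_eq max_side_c_eq r_def)
  have "max_side_c \<le> max_side_a \<longleftrightarrow> 2 * D * (r * (a * c)) \<le> 2 * D * (r * dB + D)"
    unfolding a c using ra den by (simp add: field_simps)
  then show "max_side_c \<le> max_side_a" using le D_pos by simp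
  have "max_side_c = max_side_a \<longleftrightarrow> (2 * c * D) * (r * a) = (2 * D) * (r * dB + D)"
    unfolding a c using ra den by (intro frac_eq_eq) auto
  also have "\<dots> \<longleftrightarrow> 2 * D * (r * (a * c)) = 2 * D * (r * dB + D)" by (simp add: mult_ac)
  finally show "max_side_c = max_side_a \<longleftrightarrow> D = sqrt 3 * dB" using eq D_pos by (auto simp: r_def)
qed



lemma max_side_b_compare_c:
  assumes "D \<le> sqrt 3 * dB"
  shows "max_side_b < max_side_c \<longleftrightarrow> 0 < 2 * dA + b * c"
    "max_side_b = max_side_c \<longleftrightarrow> 2 * dA + b * c = 0"
proof -
  define r where "r = sqrt 3"
  have r: "0 < r" "r * r = 3" by (simp_all add: r_def)
  have denB: "0 < r * dB + D" using assms D_pos by (simp add: r_def add_nonneg_pos)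
  have denC: "0 < r * dC + D" using D_less_sqrt3_dC D_pos by (simp add: r_def)
  have b: "max_side_b = 2 * b * D / (r * dC + D)" and c: "max_side_c = 2 * c * D / (r * dB + D)"
    using assms by (simp_all add: max_side_b_eq max_side_c_eq r_def)
  have factor: "c * (r * dC + D) - b * (r * dB + D) = (b - c) * (r * (b * c + dA) - D)"
  proof -
    have dC: "dC = b\<^sup>2 - dA" and dB: "dB = c\<^sup>2 - dA" using sum_AB sum_CA by linarith+
    show ?thesis unfolding dC dB by (simp add: power2_eq_square algebra_simps)
  qed
  have "0 < D\<^sup>2" using D_pos by simp
  then have "dA\<^sup>2 < (b * c)\<^sup>2" using lagrange_A by linarith
  then have "\<bar>dA\<bar> < b * c"
    using less_iff_power2_less[of "\<bar>dA\<bar>" "b * c"] sides_pos c_pos by simp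
  then have bc_dA: "0 < b * c + dA" by linarith
  define K where "K = r * (b * c + dA)"
  have K: "0 < K" using bc_dA r by (simp add: K_def)
  have idK: "K\<^sup>2 - D\<^sup>2 = 2 * (b * c + dA) * (b * c + 2 * dA)"
    unfolding K_def using lagrange_A r(2) by algebra
  have "D < K \<longleftrightarrow> D\<^sup>2 < K\<^sup>2" using less_iff_power2_less[of D K] D_pos K by simp
  also have "\<dots> \<longleftrightarrow> 0 < K\<^sup>2 - D\<^sup>2" by simp
  also have "\<dots> \<longleftrightarrow> 0 < b * c + 2 * dA" unfolding idK using bc_dA by (simp add: zero_less_mult_iff)
  finally have KD_less: "D < K \<longleftrightarrow> 0 < 2 * dA + b * c" by (simp add: add.commute)
  have "D = K \<longleftrightarrow> D\<^sup>2 = K\<^sup>2" using power2_eq_iff_nonneg[of D K] D_pos K by simp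
  also have "\<dots> \<longleftrightarrow> K\<^sup>2 - D\<^sup>2 = 0" by auto
  also have "\<dots> \<longleftrightarrow> b * c + 2 * dA = 0" unfolding idK using bc_dA by simp
  finally have KD_eq: "D = K \<longleftrightarrow> 2 * dA + b * c = 0" by (simp add: add.commute)
  have diff: "(2 * c * D) * (r * dC + D) - (2 * b * D) * (r * dB + D) = 2 * D * ((b - c) * (K - D))"
    unfolding K_def factor[symmetric] by (simp add: algebra_simps)
  have "max_side_b < max_side_c \<longleftrightarrow> (2 * b * D) * (r * dB + D) < (2 * c * D) * (r * dC + D)"
    unfolding b c using denB denC by (simp add: divide_less_eq less_divide_eq mult.commute)
  also have "\<dots> \<longleftrightarrow> 0 < 2 * D * ((b - c) * (K - D))" by (simp flip: diff)
  finally show "max_side_b < max_side_c \<longleftrightarrow> 0 < 2 * dA + b * c"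
    using KD_less c_less_b D_pos by (simp add: zero_less_mult_iff)
  have "max_side_b = max_side_c \<longleftrightarrow> (2 * b * D) * (r * dB + D) = (2 * c * D) * (r * dC + D)"
    unfolding b c using denB denC by (intro frac_eq_eq) auto
  also have "\<dots> \<longleftrightarrow> 2 * D * ((b - c) * (K - D)) = 0" by (auto simp flip: diff)
  finally show "max_side_b = max_side_c \<longleftrightarrow> 2 * dA + b * c = 0"
    using KD_eq c_less_b D_pos by auto
qed

lemma D_less_sqrt3_dB_if_wide_A:
  assumes "2 * dA + b * c \<le> 0"
  shows "D < sqrt 3 * dB"
proof -
  have "a * c < 2 * dB"
  proof (cases "a < 2 * c + b")
    case True
    then have "a * c < (2 * c + b) * c" using c_pos by (simp add: mult_strict_right_mono)
    then show ?thesis using sum_AB sum_BC sum_CA assms by (simp add: power2_eq_square algebra_simps)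
  next
    case False
    then have "(2 * c + b) * (c + b) \<le> a * (a - c)" using c_pos c_less_b by (intro mult_mono) auto
    moreover have "0 < b * c" "0 < c * c" using c_pos c_less_b by simp_all
    ultimately show ?thesis using sum_AB sum_BC sum_CA by (simp add: power2_eq_square algebra_simps)
  qed
  then show ?thesis using sqrt3_mult_compare(1)[OF D_pos _ lagrange_B] sides_pos c_pos by simp
qed

end

lemma all_side_iff: "(\<forall>x. P x) \<longleftrightarrow> P SideA \<and> P SideB \<and> P SideC"
  by (metis side.exhaust)

lemma Collect_side_eq_iff:
  "{x. P x} = S \<longleftrightarrow> (P SideA \<longleftrightarrow> SideA \<in> S) \<and> (P SideB \<longleftrightarrow> SideB \<in> S) \<and> (P SideC \<longleftrightarrow> SideC \<in> S)"
  unfolding set_eq_iff mem_Collect_eq by (rule all_side_iff)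

locale scalene_triangle =
  fixes A B C :: complex
  assumes noncollinear: "\<not> collinear {A, B, C}"
    and side_order: "dist C A < dist B C" "dist A B < dist C A"

sublocale scalene_triangle \<subseteq> triangle_invariants "dist B C" "dist C A" "dist A B"
  "(B - A) \<bullet> (C - A)" "(C - B) \<bullet> (A - B)" "(A - C) \<bullet> (B - C)" "2 * tri_area A B C"
proof
  show "dist C A < dist B C" "dist A B < dist C A" by (fact side_order)+
  show "0 < dist A B" "0 < 2 * tri_area A B C" using noncollinear tri_area_pos by auto
  show "(B - A) \<bullet> (C - A) + (C - B) \<bullet> (A - B) = (dist A B)\<^sup>2"
    using inner_sum_eq_dist_squared[where U = A and V = B and W = C] by (simp add: inner_commute)
  show "(C - B) \<bullet> (A - B) + (A - C) \<bullet> (B - C) = (dist B C)\<^sup>2"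
    using inner_sum_eq_dist_squared[where U = B and V = C and W = A] by (simp add: inner_commute)
  show "(B - A) \<bullet> (C - A) + (A - C) \<bullet> (B - C) = (dist C A)\<^sup>2"
    using inner_sum_eq_dist_squared[where U = C and V = A and W = B] by (simp add: inner_commute add.commute)
  show "((B - A) \<bullet> (C - A))\<^sup>2 + (2 * tri_area A B C)\<^sup>2 = (dist C A * dist A B)\<^sup>2"
    using inner_squared_add_area_squared[where U = A and V = B and W = C]
    by (simp add: dist_commute mult.commute)
  show "((C - B) \<bullet> (A - B))\<^sup>2 + (2 * tri_area A B C)\<^sup>2 = (dist B C * dist A B)\<^sup>2"
    using inner_squared_add_area_squared[where U = B and V = C and W = A]
    by (simp add: dist_commute tri_area_rotate)
  show "((A - C) \<bullet> (B - C))\<^sup>2 + (2 * tri_area A B C)\<^sup>2 = (dist B C * dist C A)\<^sup>2"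
    using inner_squared_add_area_squared[where U = C and V = A and W = B]
    by (simp add: dist_commute tri_area_rotate mult.commute)
qed

context scalene_triangle
begin

lemma angle_B_compare_pi_div_3:
  "tri_angle C B A < pi / 3 \<longleftrightarrow> 2 * tri_area A B C < sqrt 3 * ((C - B) \<bullet> (A - B))"
  "tri_angle C B A = pi / 3 \<longleftrightarrow> 2 * tri_area A B C = sqrt 3 * ((C - B) \<bullet> (A - B))"
  using tri_angle_compare_pi_div_3[where V = B and X = C and Y = A] noncollinear
  by (simp_all add: tri_area_rotate insert_commute)

lemma angle_A_compare_2pi_div_3:
  "2 * pi / 3 < tri_angle B A C \<longleftrightarrow> 2 * ((B - A) \<bullet> (C - A)) + dist C A * dist A B < 0"
  "tri_angle B A C = 2 * pi / 3 \<longleftrightarrow> 2 * ((B - A) \<bullet> (C - A)) + dist C A * dist A B = 0"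
  "tri_angle B A C < 2 * pi / 3 \<longleftrightarrow> 0 < 2 * ((B - A) \<bullet> (C - A)) + dist C A * dist A B"
proof -
  have "B \<noteq> A" "C \<noteq> A" using c_pos sides_pos by auto
  from tri_angle_compare_2pi_div_3[OF this] show
    "2 * pi / 3 < tri_angle B A C \<longleftrightarrow> 2 * ((B - A) \<bullet> (C - A)) + dist C A * dist A B < 0"
    "tri_angle B A C = 2 * pi / 3 \<longleftrightarrow> 2 * ((B - A) \<bullet> (C - A)) + dist C A * dist A B = 0"
    "tri_angle B A C < 2 * pi / 3 \<longleftrightarrow> 0 < 2 * ((B - A) \<bullet> (C - A)) + dist C A * dist A B"
    by (simp_all add: dist_commute mult.commute)
qed

lemma angle_B_le_pi_div_3_iff:
  "tri_angle C B A \<le> pi / 3 \<longleftrightarrow> 2 * tri_area A B C \<le> sqrt 3 * ((C - B) \<bullet> (A - B))"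
  using angle_B_compare_pi_div_3 by (auto simp: order_le_less)

lemma angle_B_less_if_angle_A_ge:
  assumes "2 * pi / 3 \<le> tri_angle B A C"
  shows "tri_angle C B A < pi / 3"
  using assms D_less_sqrt3_dB_if_wide_A angle_A_compare_2pi_div_3 angle_B_compare_pi_div_3(1)
  by (auto simp: order_le_less mult.commute)

lemma tri_area_permutations:
  "tri_area A C B = tri_area A B C" "tri_area B A C = tri_area A B C" "tri_area B C A = tri_area A B C"
  "tri_area C A B = tri_area A B C" "tri_area C B A = tri_area A B C"
  by (metis tri_area_rotate tri_area_swap)+

lemma admits_eq_sides:
  "admits_eq A B C SideA" "admits_eq A B C SideB"
  "admits_eq A B C SideC \<longleftrightarrow> tri_angle C B A \<le> pi / 3"
proof -
  have BCA: "\<not> collinear {B, C, A}" and CAB: "\<not> collinear {C, A, B}"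
    using noncollinear by (simp_all add: insert_commute)
  show "admits_eq A B C SideA"
    unfolding admits_eq_rotate admits_eq_SideC_iff[OF BCA]
    using D_less_sqrt3_dC by (simp add: tri_area_permutations inner_commute)
  show "admits_eq A B C SideB"
    unfolding admits_eq_rotate admits_eq_SideC_iff[OF CAB]
    using D_less_sqrt3_dC by (simp add: tri_area_permutations inner_commute)
  show "admits_eq A B C SideC \<longleftrightarrow> tri_angle C B A \<le> pi / 3"
    unfolding admits_eq_SideC_iff[OF noncollinear] angle_B_le_pi_div_3_iff
    using sqrt3_dA_less_D by (auto simp: inner_commute)
qed

lemma max_eq_area_sides:
  "max_eq_area A B C SideA = sqrt 3 / 4 * max_side_a\<^sup>2"
  "max_eq_area A B C SideB = sqrt 3 / 4 * max_side_b\<^sup>2"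
  "tri_angle C B A \<le> pi / 3 \<Longrightarrow> max_eq_area A B C SideC = sqrt 3 / 4 * max_side_c\<^sup>2"
proof -
  have BCA: "\<not> collinear {B, C, A}" and CAB: "\<not> collinear {C, A, B}"
    using noncollinear by (simp_all add: insert_commute)
  show "max_eq_area A B C SideA = sqrt 3 / 4 * max_side_a\<^sup>2"
    using max_eq_area_SideC[OF BCA admits_eq_sides(1)[unfolded admits_eq_rotate]]
    unfolding max_eq_area_rotate max_side_a_def max_eq_side_at_def
    by (simp add: dist_commute tri_area_permutations inner_commute)
  show "max_eq_area A B C SideB = sqrt 3 / 4 * max_side_b\<^sup>2"
    using max_eq_area_SideC[OF CAB admits_eq_sides(2)[unfolded admits_eq_rotate]]
    unfolding max_eq_area_rotate max_side_b_def max_eq_side_at_def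
    by (simp add: dist_commute tri_area_permutations inner_commute)
  show "tri_angle C B A \<le> pi / 3 \<Longrightarrow> max_eq_area A B C SideC = sqrt 3 / 4 * max_side_c\<^sup>2"
    using max_eq_area_SideC[OF noncollinear] admits_eq_sides(3)
    unfolding max_side_c_def max_eq_side_at_def by (simp add: dist_commute tri_area_permutations inner_commute)
qed

lemma max_eq_area_compare:
  "max_eq_area A B C SideB < max_eq_area A B C SideA"
  "tri_angle C B A \<le> pi / 3 \<Longrightarrow> max_eq_area A B C SideC \<le> max_eq_area A B C SideA"
  "tri_angle C B A \<le> pi / 3 \<Longrightarrow>
    max_eq_area A B C SideC = max_eq_area A B C SideA \<longleftrightarrow> tri_angle C B A = pi / 3"
  "tri_angle C B A \<le> pi / 3 \<Longrightarrow>
    max_eq_area A B C SideB < max_eq_area A B C SideC \<longleftrightarrow> tri_angle B A C < 2 * pi / 3"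
  "tri_angle C B A \<le> pi / 3 \<Longrightarrow>
    max_eq_area A B C SideB = max_eq_area A B C SideC \<longleftrightarrow> tri_angle B A C = 2 * pi / 3"
proof -
  have area_mono: "sqrt 3 / 4 * x\<^sup>2 < sqrt 3 / 4 * y\<^sup>2 \<longleftrightarrow> x < y"
    "sqrt 3 / 4 * x\<^sup>2 \<le> sqrt 3 / 4 * y\<^sup>2 \<longleftrightarrow> x \<le> y"
    "sqrt 3 / 4 * x\<^sup>2 = sqrt 3 / 4 * y\<^sup>2 \<longleftrightarrow> x = y" if "0 \<le> x" "0 \<le> y" for x y :: real
    using that less_iff_power2_less[OF that] power2_eq_iff_nonneg[OF that] by (auto simp: not_less)
  have b: "0 \<le> max_side_b" and a: "0 \<le> max_side_a" using max_side_b_pos max_side_b_less_a by simp_all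
  show "max_eq_area A B C SideB < max_eq_area A B C SideA"
    unfolding max_eq_area_sides area_mono(1)[OF b a] by (rule max_side_b_less_a)
  assume "tri_angle C B A \<le> pi / 3"
  then have dB: "2 * tri_area A B C \<le> sqrt 3 * ((C - B) \<bullet> (A - B))"
    and areas: "max_eq_area A B C SideC = sqrt 3 / 4 * max_side_c\<^sup>2"
    using angle_B_le_pi_div_3_iff max_eq_area_sides(3) by simp_all
  have c: "0 \<le> max_side_c" using max_side_c_eq[OF dB] D_pos c_pos dB by simp
  show "max_eq_area A B C SideC \<le> max_eq_area A B C SideA"
    unfolding max_eq_area_sides areas area_mono(2)[OF c a] by (rule max_side_c_le_a(1)[OF dB])
  show "max_eq_area A B C SideC = max_eq_area A B C SideA \<longleftrightarrow> tri_angle C B A = pi / 3"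
    unfolding max_eq_area_sides areas area_mono(3)[OF c a] max_side_c_le_a(2)[OF dB]
    using angle_B_compare_pi_div_3(2) by simp
  show "max_eq_area A B C SideB < max_eq_area A B C SideC \<longleftrightarrow> tri_angle B A C < 2 * pi / 3"
    unfolding max_eq_area_sides areas area_mono(1)[OF b c] max_side_b_compare_c(1)[OF dB]
    using angle_A_compare_2pi_div_3(3) by (simp add: mult.commute)
  show "max_eq_area A B C SideB = max_eq_area A B C SideC \<longleftrightarrow> tri_angle B A C = 2 * pi / 3"
    unfolding max_eq_area_sides areas area_mono(3)[OF b c] max_side_b_compare_c(2)[OF dB]
    using angle_A_compare_2pi_div_3(2) by (simp add: mult.commute)
qed

lemma max_sides_eq: "max_sides A B C = (if tri_angle C B A = pi / 3 then {SideA, SideC} else {SideA})"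
proof (cases "tri_angle C B A \<le> pi / 3")
  case True
  then show ?thesis
    unfolding max_sides_def Collect_side_eq_iff all_side_iff
    using admits_eq_sides max_eq_area_compare(1) max_eq_area_compare(2,3)[OF True] by auto
next
  case False
  then show ?thesis
    unfolding max_sides_def Collect_side_eq_iff all_side_iff
    using admits_eq_sides max_eq_area_compare(1) by auto
qed

lemma min_sides_if_angle_B_ge:
  assumes "pi / 3 \<le> tri_angle C B A"
  shows "min_sides A B C = {SideB}"
proof (cases "tri_angle C B A = pi / 3")
  case True
  then have le: "tri_angle C B A \<le> pi / 3" by simp
  show ?thesis
    unfolding min_sides_def Collect_side_eq_iff all_side_iff
    using True admits_eq_sides max_eq_area_compare(1) max_eq_area_compare(2,3)[OF le] by auto
next
  case False
  then show ?thesis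
    unfolding min_sides_def Collect_side_eq_iff all_side_iff
    using assms admits_eq_sides max_eq_area_compare(1) by auto
qed

lemma min_sides_if_angle_B_less:
  assumes "tri_angle C B A < pi / 3"
  shows "min_sides A B C = (if tri_angle B A C < 2 * pi / 3 then {SideB}
    else if tri_angle B A C = 2 * pi / 3 then {SideB, SideC} else {SideC})"
proof -
  have "tri_angle C B A \<le> pi / 3" using assms by simp
  note compare = max_eq_area_compare(1) max_eq_area_compare(2-5)[OF this]
  show ?thesis
    unfolding min_sides_def Collect_side_eq_iff all_side_iff
    using assms admits_eq_sides compare by auto
qed

end

theorem mainTheorem1:
  fixes A B C :: complex
  assumes tri: "\<not> collinear {A, B, C}"
    and sides: "dist B C > dist C A" "dist C A > dist A B"
  defines "\<alpha> \<equiv> tri_angle B A C" and "\<beta> \<equiv> tri_angle C B A"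
  shows "max_sides A B C = (if \<beta> = pi / 3 then {SideA, SideC} else {SideA})
         \<and> (\<alpha> > 2 * pi / 3 \<longrightarrow> min_sides A B C = {SideC})
         \<and> (\<alpha> = 2 * pi / 3 \<longrightarrow> min_sides A B C = {SideB, SideC})
         \<and> (pi / 3 < \<alpha> \<and> \<alpha> < 2 * pi / 3 \<and> \<beta> < pi / 3 \<longrightarrow> min_sides A B C = {SideB})
         \<and> (\<beta> \<ge> pi / 3 \<longrightarrow> min_sides A B C = {SideB})"
proof -
  interpret scalene_triangle A B C
    using assms by unfold_locales
  show ?thesis
    unfolding \<alpha>_def \<beta>_def
    using max_sides_eq min_sides_if_angle_B_ge min_sides_if_angle_B_less angle_B_less_if_angle_A_ge
    by (auto simp: not_le)
qed

end
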